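(* Let $\mathbb{K}$ be either $\mathbb{R}$ or $\mathbb{C}$, with all coefficients and solutions taken in $\mathbb{K}$. Let $(p,q)$ be a conjugate pair. Let $I$ be an infinite set. For all $i \in I$, let $\mathbf{a}_i = (a_{i,j})_{j=1}^{\infty} \in \ell^p$, let $b_i \in \mathbb{K}$, and consider the linear equation in infinitely many variables \[ L_i(\mathbf{x}) = \sum_{j=1}^{\infty} a_{i,j} x_j = b_i. \] Let $M>0$. Suppose that for every finite subset $S$ of $I$ and every $\varepsilon>0$, the finite set of inequalities $\{ |L_i(\mathbf{x}) - b_i| \le \varepsilon : i \in S\}$ has a solution $\mathbf{x}_{S,\varepsilon} \in \ell^q$ with $\|\mathbf{x}_{S,\varepsilon}\|_q \le M$. Then the infinite set of linear equations $\{L_i(\mathbf{x}) = b_i : i \in I\}$ has an exact solution $\mathbf{x} \in \ell^q$ with $\|\mathbf{x}\|_q \le M$.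
   Context: A pair $(p,q)$ is called a conjugate pair if either $p>1$, $q>1$ are real numbers with $1/p + 1/q = 1$, or $p=1$ and $q=\infty$. For $1\le p<\infty$, $\ell^p$ is the space of sequences $\mathbf{a}=(a_j)_{j\ge1}$ with $\|\mathbf{a}\|_p = (\sum_j |a_j|^p)^{1/p}<\infty$, and $\ell^\infty$ is the space of bounded sequences with $\|\mathbf{a}\|_\infty = \sup_j |a_j|$. For $\mathbf{a}\in\ell^p$, $\mathbf{x}\in\ell^q$ the series $\sum_j a_j x_j$ converges absolutely by Hölder's inequality. *)

theory Defs
  imports "HOL-Analysis.Analysis"
begin

definition conjugate_pair :: "real \<Rightarrow> ereal \<Rightarrow> bool" where
  "conjugate_pair p q \<longleftrightarrow>
     (p > 1 \<and> q > 1 \<and> q \<noteq> \<infinity> \<and> 1 / p + 1 / real_of_ereal q = 1) \<or> (p = 1 \<and> q = \<infinity>)"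

text \<open>Membership in l^p for p in [1, infinity] (sequences indexed by nat, starting at 0).\<close>
definition in_lp :: "ereal \<Rightarrow> (nat \<Rightarrow> 'a::real_normed_vector) \<Rightarrow> bool" where
  "in_lp p x \<longleftrightarrow>
     (if p = \<infinity> then (\<exists>B. \<forall>j. norm (x j) \<le> B)
      else summable (\<lambda>j. norm (x j) powr real_of_ereal p))"

definition lp_norm :: "ereal \<Rightarrow> (nat \<Rightarrow> 'a::real_normed_vector) \<Rightarrow> real" where
  "lp_norm p x =
     (if p = \<infinity> then (SUP j. norm (x j))
      else (\<Sum>j. norm (x j) powr real_of_ereal p) powr (1 / real_of_ereal p))"

end

theory Submission
  imports Defs
begin

text \<open>
  Give sequences \<open>nat \<Rightarrow> 'a\<close> the product topology of coordinatewise convergence. The closed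
  \<open>\<ell>\<^sup>q\<close> ball of radius \<open>M\<close> is a closed subset of \<open>\<Prod>\<^sub>j cball 0 M\<close>, hence compact by
  Tychonoff. On this ball each functional \<open>x \<mapsto> \<Sum>\<^sub>j a\<^sub>j x\<^sub>j\<close> with \<open>a \<in> \<ell>\<^sup>p\<close> is the uniform
  limit of its (continuous) partial sums, because Young's inequality bounds the tails
  uniformly over the ball by the \<open>\<ell>\<^sup>p\<close> tails of \<open>a\<close>; so it is continuous. The sets of points of
  the ball with \<open>|L\<^sub>i x - b\<^sub>i| \<le> \<epsilon>\<close> are therefore closed, and the hypothesis says exactly that
  they have the finite intersection property.
\<close>

definition lp_ball :: "ereal \<Rightarrow> real \<Rightarrow> (nat \<Rightarrow> 'a::real_normed_vector) set" where
  "lp_ball q M = {x. in_lp q x \<and> lp_norm q x \<le> M}"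

lemma lp_ball_infinity: "lp_ball \<infinity> M = {x. \<forall>j. norm (x j) \<le> M}"
proof (intro set_eqI iffI)
  fix x :: "nat \<Rightarrow> 'a"
  assume "x \<in> lp_ball \<infinity> M"
  then have bdd: "bdd_above (range (\<lambda>j. norm (x j)))" and sup: "(SUP j. norm (x j)) \<le> M"
    by (auto simp: lp_ball_def in_lp_def lp_norm_def intro: bdd_aboveI2)
  show "x \<in> {x. \<forall>j. norm (x j) \<le> M}"
    using order_trans[OF cSUP_upper[OF _ bdd] sup] by auto
qed (auto simp: lp_ball_def in_lp_def lp_norm_def intro!: cSUP_least)

lemma mem_lp_ball_ereal:
  assumes "r > 0" "M \<ge> 0"
  shows "x \<in> lp_ball (ereal r) M \<longleftrightarrow>
           summable (\<lambda>j. norm (x j) powr r) \<and> (\<Sum>j. norm (x j) powr r) \<le> M powr r"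
proof -
  have root_le_iff: "S powr (1/r) \<le> M \<longleftrightarrow> S \<le> M powr r" if "S \<ge> 0" for S
    using assms that powr_mono2[of r "S powr (1/r)" M] powr_mono2[of "1/r" S "M powr r"]
    by (auto simp: powr_powr)
  have "(\<Sum>j. norm (x j) powr r) \<ge> 0" if "summable (\<lambda>j. norm (x j) powr r)"
    using that by (intro suminf_nonneg) auto
  then show ?thesis
    using root_le_iff by (auto simp: lp_ball_def in_lp_def lp_norm_def)
qed

lemma lp_ball_ereal_eq_partial_sums:
  assumes "r > 0" "M \<ge> 0"
  shows "lp_ball (ereal r) M = {x. \<forall>n. (\<Sum>j<n. norm (x j) powr r) \<le> M powr r}"
proof (intro set_eqI iffI)
  fix x :: "nat \<Rightarrow> 'a"
  assume "x \<in> lp_ball (ereal r) M"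
  then show "x \<in> {x. \<forall>n. (\<Sum>j<n. norm (x j) powr r) \<le> M powr r}"
    using assms by (auto simp: mem_lp_ball_ereal intro: order_trans[OF sum_le_suminf])
next
  fix x :: "nat \<Rightarrow> 'a"
  assume "x \<in> {x. \<forall>n. (\<Sum>j<n. norm (x j) powr r) \<le> M powr r}"
  then have partial: "\<And>n. (\<Sum>j<n. norm (x j) powr r) \<le> M powr r"
    by blast
  have "summable (\<lambda>j. norm (x j) powr r)"
    using partial by (intro summableI_nonneg_bounded) auto
  with partial show "x \<in> lp_ball (ereal r) M"
    using assms by (auto simp: mem_lp_ball_ereal intro: suminf_le_const)
qed

lemma lp_ball_subset_sup_norm_ball:
  assumes "q > 0" "M \<ge> 0"
  shows "lp_ball q M \<subseteq> {x. \<forall>j. norm (x j) \<le> M}"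
proof (cases q)
  case (real r)
  show ?thesis
  proof safe
    fix x :: "nat \<Rightarrow> 'a" and j
    assume "x \<in> lp_ball q M"
    then have "\<forall>n. (\<Sum>j<n. norm (x j) powr r) \<le> M powr r"
      using assms real by (simp add: lp_ball_ereal_eq_partial_sums)
    moreover have "norm (x j) powr r \<le> (\<Sum>i<Suc j. norm (x i) powr r)"
      by (rule member_le_sum) auto
    ultimately have "norm (x j) powr r \<le> M powr r"
      by (meson order_trans)
    then show "norm (x j) \<le> M"
      using assms real powr_less_mono2[of r M "norm (x j)"] by force
  qed
qed (use assms lp_ball_infinity in auto)

lemma compact_sup_norm_ball:
  "compact {x :: nat \<Rightarrow> 'a::{real_normed_vector,heine_borel}. \<forall>j. norm (x j) \<le> M}"
proof -
  have "compactin (product_topology (\<lambda>_. euclidean) UNIV) (PiE UNIV (\<lambda>_::nat. cball (0::'a) M))"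
    by (simp add: compactin_PiE)
  moreover have "PiE UNIV (\<lambda>_::nat. cball (0::'a) M) = {x. \<forall>j. norm (x j) \<le> M}"
    by (auto simp: PiE_UNIV_domain Pi_def)
  ultimately show ?thesis
    by (simp add: euclidean_product_topology)
qed

lemma closed_lp_ball:
  assumes "q > 0" "M \<ge> 0"
  shows "closed (lp_ball q M :: (nat \<Rightarrow> 'a::real_normed_vector) set)"
proof (cases q)
  case (real r)
  have "closed {x :: nat \<Rightarrow> 'a. (\<Sum>j<n. norm (x j) powr r) \<le> M powr r}" for n
    using assms real
    by (intro closed_Collect_le continuous_on_sum continuous_on_powr' continuous_on_norm
        continuous_on_product_coordinates continuous_on_const) auto
  then show ?thesis
    using assms real by (simp add: lp_ball_ereal_eq_partial_sums Collect_all_eq closed_INT)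
next
  case PInf
  have "closed {x :: nat \<Rightarrow> 'a. norm (x j) \<le> M}" for j
    by (intro closed_Collect_le continuous_on_norm continuous_on_product_coordinates
        continuous_on_const)
  then show ?thesis
    using PInf by (simp add: lp_ball_infinity Collect_all_eq closed_INT)
qed (use assms in simp)

lemma compact_lp_ball:
  assumes "q > 0" "M \<ge> 0"
  shows "compact (lp_ball q M :: (nat \<Rightarrow> 'a::{real_normed_vector,heine_borel}) set)"
  using compact_Int_closed[OF compact_sup_norm_ball[of M] closed_lp_ball[OF assms]]
    lp_ball_subset_sup_norm_ball[OF assms]
  by (metis Int_absorb1)

lemma uniform_limit_partial_sums_dominated:
  fixes f :: "nat \<Rightarrow> 'b \<Rightarrow> 'a::banach"
  assumes dominated: "\<And>\<delta>. \<delta> > 0 \<Longrightarrow> \<exists>g. summable g \<and> (\<forall>x\<in>B. \<exists>h. summable h \<and> (\<forall>j. h j \<ge> 0) \<and>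
             (\<Sum>j. h j) \<le> \<delta> \<and> (\<forall>j. norm (f j x) \<le> g j + h j))"
  shows "uniform_limit B (\<lambda>n x. \<Sum>j<n. f j x) (\<lambda>x. \<Sum>j. f j x) sequentially"
proof (rule uniform_limitI)
  fix e :: real
  assume "e > 0"
  then obtain g where g: "summable g"
    and gh: "\<And>x. x \<in> B \<Longrightarrow> \<exists>h. summable h \<and> (\<forall>j. h j \<ge> 0) \<and>
             (\<Sum>j. h j) \<le> e/2 \<and> (\<forall>j. norm (f j x) \<le> g j + h j)"
    using dominated[of "e/2"] by auto
  obtain N where N: "\<And>n. n \<ge> N \<Longrightarrow> norm (\<Sum>j. g (j + n)) < e/2"
    using suminf_exist_split[OF _ g, of "e/2"] \<open>e > 0\<close> by auto
  have "dist (\<Sum>j<n. f j x) (\<Sum>j. f j x) < e" if "x \<in> B" "n \<ge> N" for x n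
  proof -
    obtain h where h: "summable h" "\<And>j. h j \<ge> 0" "(\<Sum>j. h j) \<le> e/2"
      and fgh: "\<And>j. norm (f j x) \<le> g j + h j"
      using gh[OF \<open>x \<in> B\<close>] by auto
    have f_abs: "summable (\<lambda>j. norm (f j x))"
      using fgh by (intro summable_comparison_test'[OF summable_add[OF g h(1)]]) auto
    have shifted: "summable (\<lambda>j. g (j + n))" "summable (\<lambda>j. h (j + n))"
      "summable (\<lambda>j. norm (f (j + n) x))"
      using summable_ignore_initial_segment[OF g] summable_ignore_initial_segment[OF h(1)]
        summable_ignore_initial_segment[OF f_abs] by auto
    have "dist (\<Sum>j<n. f j x) (\<Sum>j. f j x) = norm (\<Sum>j. f (j + n) x)"
      using suminf_minus_initial_segment[OF summable_norm_cancel[OF f_abs], of n]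
      by (simp add: dist_norm norm_minus_commute)
    also have "\<dots> \<le> (\<Sum>j. norm (f (j + n) x))"
      using shifted(3) by (rule summable_norm)
    also have "\<dots> \<le> (\<Sum>j. g (j + n)) + (\<Sum>j. h (j + n))"
      using shifted fgh by (subst suminf_add) (auto intro!: suminf_le summable_add)
    also have "(\<Sum>j. h (j + n)) \<le> (\<Sum>j. h j)"
      using h(1,2) by (simp add: suminf_minus_initial_segment sum_nonneg)
    also have "(\<Sum>j. g (j + n)) < e/2"
      using N[OF \<open>n \<ge> N\<close>] by simp
    finally show ?thesis
      using h(3) by simp
  qed
  then show "\<forall>\<^sub>F n in sequentially. \<forall>x\<in>B. dist (\<Sum>j<n. f j x) (\<Sum>j. f j x) < e"
    unfolding eventually_sequentially by blast
qed

lemma norm_mult_le_Young: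
  fixes u v :: "'a::real_normed_div_algebra"
  assumes "p > 1" "r > 1" "1/p + 1/r = 1" "t > 0"
  shows "norm (u * v) \<le> t powr p / p * norm u powr p + norm v powr r / (r * t powr r)"
proof -
  have "norm (u * v) = (t * norm u) * (norm v / t)"
    using assms by (simp add: norm_mult)
  also have "\<dots> \<le> (t * norm u) powr p / p + (norm v / t) powr r / r"
    using assms by (intro Youngs_inequality) auto
  also have "\<dots> = t powr p / p * norm u powr p + norm v powr r / (r * t powr r)"
    using assms by (simp add: powr_mult powr_divide)
  finally show ?thesis .
qed

lemma uniform_limit_pairing_lp_ball_ereal:
  fixes a :: "nat \<Rightarrow> 'a::{real_normed_div_algebra,banach}"
  assumes p: "p > 1" "r > 1" "1/p + 1/r = 1" and a: "summable (\<lambda>j. norm (a j) powr p)"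
    and "M \<ge> 0"
  shows "uniform_limit (lp_ball (ereal r) M) (\<lambda>n x. \<Sum>j<n. a j * x j) (\<lambda>x. \<Sum>j. a j * x j)
           sequentially"
proof (rule uniform_limit_partial_sums_dominated)
  fix \<delta> :: real
  assume "\<delta> > 0"
  \<comment> \<open>Young's inequality with weight \<open>t\<close>: the \<open>x\<close>-part of the bound has total mass at most
    \<open>M\<^sup>r / (r t\<^sup>r)\<close>, which is \<open>\<le> \<delta>\<close> for this choice of \<open>t\<close>.\<close>
  define t where "t = (M powr r / (r * \<delta>) + 1) powr (1/r)"
  have T_pos: "M powr r / (r * \<delta>) + 1 > 0"
    using p \<open>\<delta> > 0\<close> by (intro add_nonneg_pos divide_nonneg_pos) auto
  then have "t > 0"
    unfolding t_def by simp
  have "t powr r = M powr r / (r * \<delta>) + 1"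
    using p T_pos unfolding t_def by (simp add: powr_powr)
  then have "M powr r \<le> \<delta> * (r * t powr r)"
    using p \<open>\<delta> > 0\<close> by (simp add: field_simps)
  then have small: "M powr r / (r * t powr r) \<le> \<delta>"
    using p \<open>t > 0\<close> by (simp add: pos_divide_le_eq)
  have "\<exists>h. summable h \<and> (\<forall>j. h j \<ge> 0) \<and> (\<Sum>j. h j) \<le> \<delta> \<and>
          (\<forall>j. norm (a j * x j) \<le> t powr p / p * norm (a j) powr p + h j)"
    if "x \<in> lp_ball (ereal r) M" for x
  proof (intro exI conjI allI)
    have x: "summable (\<lambda>j. norm (x j) powr r)" "(\<Sum>j. norm (x j) powr r) \<le> M powr r"
      using that p \<open>M \<ge> 0\<close> by (simp_all add: mem_lp_ball_ereal)
    then show "summable (\<lambda>j. norm (x j) powr r / (r * t powr r))"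
      by (intro summable_divide) auto
    have "(\<Sum>j. norm (x j) powr r / (r * t powr r)) = (\<Sum>j. norm (x j) powr r) / (r * t powr r)"
      using x(1) by (rule suminf_divide)
    also have "\<dots> \<le> M powr r / (r * t powr r)"
      using x(2) p \<open>t > 0\<close> by (intro divide_right_mono) auto
    finally show "(\<Sum>j. norm (x j) powr r / (r * t powr r)) \<le> \<delta>"
      using small by linarith
  qed (use p \<open>t > 0\<close> norm_mult_le_Young in auto)
  then show "\<exists>g. summable g \<and> (\<forall>x\<in>lp_ball (ereal r) M. \<exists>h. summable h \<and> (\<forall>j. h j \<ge> 0) \<and>
          (\<Sum>j. h j) \<le> \<delta> \<and> (\<forall>j. norm (a j * x j) \<le> g j + h j))"
    using a by (intro exI[of _ "\<lambda>j. t powr p / p * norm (a j) powr p"]) auto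
qed

lemma uniform_limit_pairing_lp_ball_infinity:
  fixes a :: "nat \<Rightarrow> 'a::{real_normed_div_algebra,banach}"
  assumes "summable (\<lambda>j. norm (a j))"
  shows "uniform_limit (lp_ball \<infinity> M) (\<lambda>n x. \<Sum>j<n. a j * x j) (\<lambda>x. \<Sum>j. a j * x j)
           sequentially"
proof (rule Weierstrass_m_test)
  fix j and x :: "nat \<Rightarrow> 'a"
  assume "x \<in> lp_ball \<infinity> M"
  then have "norm (a j) * norm (x j) \<le> norm (a j) * M"
    by (intro mult_left_mono) (auto simp: lp_ball_infinity)
  then show "norm (a j * x j) \<le> M * norm (a j)"
    by (simp add: norm_mult mult.commute)
qed (use assms in \<open>rule summable_mult\<close>)

lemma uniform_limit_pairing_lp_ball:
  fixes a :: "nat \<Rightarrow> 'a::{real_normed_div_algebra,banach}"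
  assumes "conjugate_pair p q" "in_lp (ereal p) a" "M \<ge> 0"
  shows "uniform_limit (lp_ball q M) (\<lambda>n x. \<Sum>j<n. a j * x j) (\<lambda>x. \<Sum>j. a j * x j)
           sequentially"
proof -
  from assms(1) consider (finite) r where "p > 1" "r > 1" "1/p + 1/r = 1" "q = ereal r"
    | (infinite) "p = 1" "q = \<infinity>"
    unfolding conjugate_pair_def by (cases q) auto
  then show ?thesis
  proof cases
    case finite
    have "summable (\<lambda>j. norm (a j) powr p)"
      using assms(2) by (simp add: in_lp_def)
    from uniform_limit_pairing_lp_ball_ereal[OF finite(1-3) this \<open>M \<ge> 0\<close>]
    show ?thesis
      by (simp add: finite(4))
  next
    case infinite
    have "summable (\<lambda>j. norm (a j))"
      using assms(2) by (simp add: in_lp_def infinite)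
    from uniform_limit_pairing_lp_ball_infinity[OF this]
    show ?thesis
      by (simp add: infinite)
  qed
qed

lemma continuous_on_pairing_lp_ball:
  fixes a :: "nat \<Rightarrow> 'a::{real_normed_div_algebra,banach}"
  assumes "conjugate_pair p q" "in_lp (ereal p) a" "M \<ge> 0"
  shows "continuous_on (lp_ball q M) (\<lambda>x. \<Sum>j. a j * x j)"
proof -
  have "continuous_on UNIV (\<lambda>x::nat \<Rightarrow> 'a. \<Sum>j<n. a j * x j)" for n
    by (intro continuous_on_sum continuous_on_mult continuous_on_const
        continuous_on_product_coordinates)
  then have "continuous_on (lp_ball q M) (\<lambda>x. \<Sum>j<n. a j * x j)" for n
    by (rule continuous_on_subset) simp
  then show ?thesis
    using uniform_limit_pairing_lp_ball[OF assms]
    by (intro uniform_limit_theorem[where F = sequentially]) (simp_all add: always_eventually)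
qed

lemma compact_approximately_solvable_imp_solvable:
  fixes f :: "'i \<Rightarrow> 'a::t2_space \<Rightarrow> 'b::metric_space"
  assumes "compact K" and cont: "\<And>i. i \<in> I \<Longrightarrow> continuous_on K (f i)"
    and approx: "\<And>S \<epsilon>. finite S \<Longrightarrow> S \<subseteq> I \<Longrightarrow> \<epsilon> > 0 \<Longrightarrow>
                   \<exists>x\<in>K. \<forall>i\<in>S. dist (f i x) (b i) \<le> \<epsilon>"
  shows "\<exists>x\<in>K. \<forall>i\<in>I. f i x = b i"
proof -
  define C where "C = (\<lambda>(i, \<epsilon>::real). K \<inter> f i -` cball (b i) \<epsilon>)"
  have "K \<inter> (\<Inter>k\<in>I \<times> {0<..}. C k) \<noteq> {}"
  proof (rule compact_imp_fip_image[OF \<open>compact K\<close>])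
    show "closed (C k)" if "k \<in> I \<times> {0<..}" for k
      using that cont compact_imp_closed[OF \<open>compact K\<close>]
      by (auto simp: C_def intro: continuous_closed_preimage)
  next
    fix J :: "('i \<times> real) set"
    assume J: "finite J" "J \<subseteq> I \<times> {0<..}"
    \<comment> \<open>\<open>insert 1\<close> keeps \<open>\<epsilon>\<close> meaningful when \<open>J = {}\<close>.\<close>
    define \<epsilon> where "\<epsilon> = Min (insert 1 (snd ` J))"
    have "\<epsilon> > 0"
      using J unfolding \<epsilon>_def by (subst Min_gr_iff) auto
    moreover have "fst ` J \<subseteq> I"
      using J by auto
    ultimately obtain x where "x \<in> K" and x: "\<forall>i\<in>fst ` J. dist (f i x) (b i) \<le> \<epsilon>"
      using approx[of "fst ` J" \<epsilon>] J by auto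
    have "x \<in> C k" if "k \<in> J" for k
    proof -
      obtain i \<delta> where k: "k = (i, \<delta>)"
        by (cases k)
      have "i \<in> fst ` J" "\<delta> \<in> snd ` J"
        using that k by force+
      have "\<epsilon> \<le> \<delta>"
        unfolding \<epsilon>_def using J(1) \<open>\<delta> \<in> snd ` J\<close> by (intro Min_le) auto
      moreover have "dist (f i x) (b i) \<le> \<epsilon>"
        using x \<open>i \<in> fst ` J\<close> by blast
      ultimately have "dist (f i x) (b i) \<le> \<delta>"
        by linarith
      then show ?thesis
        using \<open>x \<in> K\<close> by (simp add: C_def k dist_commute)
    qed
    then show "K \<inter> (\<Inter>k\<in>J. C k) \<noteq> {}"
      using \<open>x \<in> K\<close> by blast
  qed
  then obtain x where "x \<in> K" and x: "\<And>k. k \<in> I \<times> {0<..} \<Longrightarrow> x \<in> C k"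
    by blast
  have "f i x = b i" if "i \<in> I" for i
  proof -
    have "dist (f i x) (b i) \<le> \<epsilon>" if "\<epsilon> > 0" for \<epsilon>
    proof -
      have "x \<in> C (i, \<epsilon>)"
        using x \<open>i \<in> I\<close> that by blast
      then show ?thesis
        unfolding C_def by (simp add: dist_commute)
    qed
    then have "dist (f i x) (b i) \<le> 0"
      using field_le_epsilon[of "dist (f i x) (b i)" 0] by simp
    then show ?thesis
      by simp
  qed
  then show ?thesis
    using \<open>x \<in> K\<close> by blast
qed

lemma lp_linear_system_solvable:
  fixes a :: "'i \<Rightarrow> nat \<Rightarrow> 'a::{real_normed_div_algebra,banach,heine_borel}" and b :: "'i \<Rightarrow> 'a"
  assumes "conjugate_pair p q" "M \<ge> 0"
    and a: "\<forall>i\<in>I. in_lp (ereal p) (a i)"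
    and approx: "\<forall>S \<epsilon>. finite S \<and> S \<subseteq> I \<and> \<epsilon> > 0 \<longrightarrow>
               (\<exists>x :: nat \<Rightarrow> 'a. in_lp q x \<and> lp_norm q x \<le> M \<and>
                  (\<forall>i\<in>S. norm ((\<Sum>j. a i j * x j) - b i) \<le> \<epsilon>))"
  shows "\<exists>x :: nat \<Rightarrow> 'a. in_lp q x \<and> lp_norm q x \<le> M \<and> (\<forall>i\<in>I. (\<Sum>j. a i j * x j) = b i)"
proof -
  have "q > 0"
    using assms(1) by (cases q) (auto simp: conjugate_pair_def)
  have "\<exists>x\<in>lp_ball q M. \<forall>i\<in>I. (\<Sum>j. a i j * x j) = b i"
  proof (rule compact_approximately_solvable_imp_solvable)
    show "compact (lp_ball q M :: (nat \<Rightarrow> 'a) set)"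
      using \<open>q > 0\<close> \<open>M \<ge> 0\<close> by (rule compact_lp_ball)
    show "continuous_on (lp_ball q M) (\<lambda>x. \<Sum>j. a i j * x j)" if "i \<in> I" for i
      using a that by (intro continuous_on_pairing_lp_ball[OF assms(1) _ \<open>M \<ge> 0\<close>]) blast
  next
    fix S and \<epsilon> :: real
    assume "finite S" "S \<subseteq> I" "\<epsilon> > 0"
    then have "\<exists>x. in_lp q x \<and> lp_norm q x \<le> M \<and> (\<forall>i\<in>S. norm ((\<Sum>j. a i j * x j) - b i) \<le> \<epsilon>)"
      using approx by blast
    then show "\<exists>x\<in>lp_ball q M. \<forall>i\<in>S. dist (\<Sum>j. a i j * x j) (b i) \<le> \<epsilon>"
      by (auto simp: lp_ball_def dist_norm)
  qed
  then show ?thesis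
    unfolding lp_ball_def by blast
qed

theorem theorem2:
  fixes p :: real and q :: ereal and I :: "'i set" and M :: real
  assumes "conjugate_pair p q" and "infinite I" and "M > 0"
  shows "(\<forall>(a :: 'i \<Rightarrow> nat \<Rightarrow> real) (b :: 'i \<Rightarrow> real).
            (\<forall>i\<in>I. in_lp (ereal p) (a i)) \<longrightarrow>
            (\<forall>S \<epsilon>. finite S \<and> S \<subseteq> I \<and> \<epsilon> > 0 \<longrightarrow>
               (\<exists>x :: nat \<Rightarrow> real. in_lp q x \<and> lp_norm q x \<le> M \<and>
                  (\<forall>i\<in>S. norm ((\<Sum>j. a i j * x j) - b i) \<le> \<epsilon>))) \<longrightarrow>
            (\<exists>x :: nat \<Rightarrow> real. in_lp q x \<and> lp_norm q x \<le> M \<and>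
               (\<forall>i\<in>I. (\<Sum>j. a i j * x j) = b i)))
       \<and> (\<forall>(a :: 'i \<Rightarrow> nat \<Rightarrow> complex) (b :: 'i \<Rightarrow> complex).
            (\<forall>i\<in>I. in_lp (ereal p) (a i)) \<longrightarrow>
            (\<forall>S \<epsilon>. finite S \<and> S \<subseteq> I \<and> \<epsilon> > 0 \<longrightarrow>
               (\<exists>x :: nat \<Rightarrow> complex. in_lp q x \<and> lp_norm q x \<le> M \<and>
                  (\<forall>i\<in>S. norm ((\<Sum>j. a i j * x j) - b i) \<le> \<epsilon>))) \<longrightarrow>
            (\<exists>x :: nat \<Rightarrow> complex. in_lp q x \<and> lp_norm q x \<le> M \<and>
               (\<forall>i\<in>I. (\<Sum>j. a i j * x j) = b i)))"
proof -
  have "M \<ge> 0"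
    using \<open>M > 0\<close> by simp
  show ?thesis
    by (intro conjI allI impI; rule lp_linear_system_solvable[OF assms(1) \<open>M \<ge> 0\<close>]; assumption)
qed

end
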